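(* Let a shallow network be given, let $X$ and $Y$ be $\mathbb{R}^{V_0}$- and $\mathbb{R}^{V_2}$-valued random variables, and let $\ell:\mathbb{R}^{V_2}\times\mathbb{R}^{V_2}\to[0,\infty)$ be a $C^1$ function such that $J(\theta)=\mathbb{E}[\ell(\Psi_\theta(X),Y)]$ is $C^1$ on $\Theta$ and differentiation and integration can be interchanged. Let $\theta=(w,\beta)$ exhibit a bias or duplication redundancy, let $\lambda=(\lambda_\emptyset,(\lambda_j)_{j\in V_1})\neq0$ satisfy $\lambda_\emptyset+\sum_{j\in V_1}\lambda_j\psi(\beta_j+\sum_{i\in V_0}x_iw_{ij})=0$ for all $x\in\mathcal{X}$, and define $\theta(t)=(w(t),\beta(t))$, $t\in\mathbb{R}$, by $w_{ij}(t)=w_{ij}$, $\beta_j(t)=\beta_j$ for $i\in V_0,j\in V_1$, and $w_{jk}(t)=w_{jk}+t\lambda_j$, $\beta_k(t)=\beta_k+t\lambda_\emptyset$ for $j\in V_1,k\in V_2$. Then either $\theta(t)$ is a critical point of $J$ for all $t\in\mathbb{R}$, or there is at most one $t\in\mathbb{R}$ for which $\theta(t)$ is a critical point of $J$. If moreover $\#V_2=1$ and $\theta$ has no deactivation redundancy, then $\theta$ being a critical point of $J$ implies that $\theta(t)$ is a critical point of $J$ for all $t\in\mathbb{R}$.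
   Context: Shallow network: finite pairwise disjoint sets $V_0,V_1,V_2$ and activation $\psi$ (differentiable); $E=(V_0\times V_1)\cup(V_1\times V_2)$; $\Theta=\mathbb{R}^E\times\mathbb{R}^{V_1\cup V_2}$, $\theta=(w,\beta)$; response $(\Psi_\theta(x))_l=\beta_l+\sum_{j\in V_1}\psi(\beta_j+\sum_{i\in V_0}x_iw_{ij})w_{jl}$; $w_{j\bullet}=(w_{jl})_{l\in V_2}$, $w_{\bullet j}=(w_{ij})_{i\in V_0}$; $\mathcal{X}$ is the support of the distribution of $X$. Redundancy types: $\theta$ has a deactivation redundancy if $w_{k\bullet}=0$ for some $k\in V_1$; a bias redundancy if for some $k\in V_1$ the function $x\mapsto\psi(\beta_k+\sum_ix_iw_{ik})$ is constant on $\mathcal{X}$; a duplication redundancy if $(w_{\bullet j},\beta_j)=(w_{\bullet k},\beta_k)$ for some $j\neq k\in V_1$. *)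

theory Defs
  imports "HOL-Probability.Probability"
begin

text \<open>Shallow network with input layer V0 = UNIV::'i, hidden layer V1 = UNIV::'h,
 output layer V2 = UNIV::'o (finite types, automatically pairwise disjoint).
 A parameter theta = (w, beta) with w = (w1, w2), w1 $ i $ j = w_ij (i in V0, j in V1),
 w2 $ j $ l = w_jl (j in V1, l in V2), beta = (b1, b2), b1 $ j = beta_j, b2 $ l = beta_l.\<close>

type_synonym ('i, 'h, 'o) param =
  "((real^'h^'i) \<times> (real^'o^'h)) \<times> ((real^'h) \<times> (real^'o))"

definition Psi :: "(real \<Rightarrow> real) \<Rightarrow> ('i::finite, 'h::finite, 'o::finite) param \<Rightarrow> real^'i \<Rightarrow> real^'o" where
  "Psi \<psi> \<theta> x = (\<chi> l. (snd (snd \<theta>)) $ l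
       + (\<Sum>j\<in>UNIV. \<psi> ((fst (snd \<theta>)) $ j + (\<Sum>i\<in>UNIV. x $ i * (fst (fst \<theta>)) $ i $ j))
                     * (snd (fst \<theta>)) $ j $ l))"

definition support_of :: "'a::topological_space measure \<Rightarrow> 'a set" where
  "support_of \<mu> = {x. \<forall>U. open U \<and> x \<in> U \<longrightarrow> emeasure \<mu> U > 0}"

definition deactivation_redundancy :: "('i::finite, 'h::finite, 'o::finite) param \<Rightarrow> bool" where
  "deactivation_redundancy \<theta> \<longleftrightarrow> (\<exists>k. (snd (fst \<theta>)) $ k = 0)"

definition bias_redundancy :: "(real \<Rightarrow> real) \<Rightarrow> (real^'i) set \<Rightarrow> ('i::finite, 'h::finite, 'o::finite) param \<Rightarrow> bool" where
  "bias_redundancy \<psi> \<X> \<theta> \<longleftrightarrow> (\<exists>k. \<exists>c. \<forall>x\<in>\<X>.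
      \<psi> ((fst (snd \<theta>)) $ k + (\<Sum>i\<in>UNIV. x $ i * (fst (fst \<theta>)) $ i $ k)) = c)"

definition duplication_redundancy :: "('i::finite, 'h::finite, 'o::finite) param \<Rightarrow> bool" where
  "duplication_redundancy \<theta> \<longleftrightarrow> (\<exists>j k. j \<noteq> k \<and>
      (\<chi> i. (fst (fst \<theta>)) $ i $ j) = (\<chi> i. (fst (fst \<theta>)) $ i $ k) \<and>
      (fst (snd \<theta>)) $ j = (fst (snd \<theta>)) $ k)"

definition C1_UNIV :: "('a::real_normed_vector \<Rightarrow> 'b::real_normed_vector) \<Rightarrow> bool" where
  "C1_UNIV f \<longleftrightarrow> (\<exists>D. (\<forall>z. (f has_derivative blinfun_apply (D z)) (at z)) \<and> continuous_on UNIV D)"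

definition critical_point :: "('a::real_normed_vector \<Rightarrow> real) \<Rightarrow> 'a \<Rightarrow> bool" where
  "critical_point J \<theta> \<longleftrightarrow> (J has_derivative (\<lambda>_. 0)) (at \<theta>)"

definition theta_path :: "('i::finite, 'h::finite, 'o::finite) param \<Rightarrow> real \<Rightarrow> real^'h \<Rightarrow> real
     \<Rightarrow> ('i, 'h, 'o) param" where
  "theta_path \<theta> lam0 lam t =
     ((fst (fst \<theta>), (\<chi> j k. (snd (fst \<theta>)) $ j $ k + t * lam $ j)),
      (fst (snd \<theta>), (\<chi> k. (snd (snd \<theta>)) $ k + t * lam0)))"

end

theory Submission
  imports Defs
begin

text \<open>On the support of the input distribution the path only adds
  \<open>t (\<lambda>\<^sub>\<emptyset> + \<Sum>\<^sub>j \<lambda>\<^sub>j \<psi>(\<dots>)) = 0\<close> to every output, so the response, and with it the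
  loss, is unchanged along the path, while the derivative of the response with respect to the
  parameters changes by \<open>t\<close> times a term independent of \<open>t\<close>. By the chain rule and the
  interchange of differentiation and integration, the gradient of \<open>J\<close> along the path is therefore
  an affine function \<open>a + t b\<close> of \<open>t\<close>: it vanishes for every \<open>t\<close> if \<open>b = 0\<close> and for at
  most one \<open>t\<close> otherwise. With a single output and nonzero output weights \<open>w\<^sub>j\<close>, the change
  \<open>b\<close> is itself a directional derivative of \<open>J\<close> at \<open>\<theta>\<close>, namely in the direction that rescales the
  hidden-layer part of the direction by \<open>\<lambda>\<^sub>j / w\<^sub>j\<close>, so \<open>a = 0\<close> forces \<open>b = 0\<close>.\<close>

definition preact :: "real^'i \<Rightarrow> ('i::finite, 'h::finite, 'o::finite) param \<Rightarrow> 'h \<Rightarrow> real" where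
  "preact x \<eta> j = fst (snd \<eta>) $ j + (\<Sum>i\<in>UNIV. x $ i * fst (fst \<eta>) $ i $ j)"

definition DPsi :: "(real \<Rightarrow> real) \<Rightarrow> (real \<Rightarrow> real) \<Rightarrow> ('i::finite, 'h::finite, 'o::finite) param
    \<Rightarrow> real^'i \<Rightarrow> ('i, 'h, 'o) param \<Rightarrow> real^'o" where
  "DPsi \<psi> \<psi>' \<eta> x h = snd (snd h) + (\<Sum>j\<in>UNIV. (\<psi>' (preact x \<eta> j) * preact x h j) *\<^sub>R snd (fst \<eta>) $ j
     + \<psi> (preact x \<eta> j) *\<^sub>R snd (fst h) $ j)"

lemma Psi_eq_preact:
  "Psi \<psi> \<eta> x = snd (snd \<eta>) + (\<Sum>j\<in>UNIV. \<psi> (preact x \<eta> j) *\<^sub>R snd (fst \<eta>) $ j)"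
  by (simp add: Psi_def preact_def vec_eq_iff mult.commute)

lemma linear_preact: "linear (\<lambda>\<eta>. preact x \<eta> j)"
  by (rule linearI) (auto simp: preact_def algebra_simps sum.distrib sum_distrib_left)

lemma has_derivative_Psi:
  assumes \<psi>': "\<And>z. (\<psi> has_real_derivative \<psi>' z) (at z)"
  shows "((\<lambda>\<eta>. Psi \<psi> \<eta> x) has_derivative DPsi \<psi> \<psi>' \<eta>\<^sub>0 x) (at \<eta>\<^sub>0)"
proof -
  have act: "((\<lambda>\<eta>. \<psi> (preact x \<eta> j)) has_derivative (\<lambda>h. preact x h j * \<psi>' (preact x \<eta>\<^sub>0 j))) (at \<eta>\<^sub>0)"
    for j
    using DERIV_compose_FDERIV[OF \<psi>' linear_imp_has_derivative[OF linear_preact]] .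
  have weight: "((\<lambda>\<eta>. snd (fst \<eta>) $ j) has_derivative (\<lambda>h. snd (fst h) $ j)) (at \<eta>\<^sub>0)" for j
    by (intro linear_imp_has_derivative linearI) auto
  have bias: "((\<lambda>\<eta>. snd (snd \<eta>)) has_derivative (\<lambda>h. snd (snd h))) (at \<eta>\<^sub>0)"
    by (intro has_derivative_snd has_derivative_ident)
  have "((\<lambda>\<eta>. snd (snd \<eta>) + (\<Sum>j\<in>UNIV. \<psi> (preact x \<eta> j) *\<^sub>R snd (fst \<eta>) $ j)) has_derivative
      (\<lambda>h. snd (snd h) + (\<Sum>j\<in>UNIV. \<psi> (preact x \<eta>\<^sub>0 j) *\<^sub>R snd (fst h) $ j
        + (preact x h j * \<psi>' (preact x \<eta>\<^sub>0 j)) *\<^sub>R snd (fst \<eta>\<^sub>0) $ j))) (at \<eta>\<^sub>0)"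
    by (intro has_derivative_add bias has_derivative_sum has_derivative_scaleR act weight)
  then show ?thesis
    unfolding Psi_eq_preact[abs_def]
    by (rule has_derivative_eq_rhs) (simp add: DPsi_def fun_eq_iff add_ac mult.commute)
qed

lemma AE_in_support_of:
  fixes X :: "'a \<Rightarrow> 'b::second_countable_topology"
  assumes X: "X \<in> borel_measurable M"
  shows "AE \<omega> in M. X \<omega> \<in> support_of (distr M borel X)"
proof -
  define \<mu> where "\<mu> = distr M borel X"
  define F where "F = {U. open U \<and> emeasure \<mu> U = 0}"
  obtain F' where F': "F' \<subseteq> F" "countable F'" "\<Union>F' = \<Union>F"
    using Lindelof[of F] unfolding F_def by blast
  have "(\<Union>U\<in>F'. U) \<in> null_sets \<mu>"
    using F' by (intro null_sets_UN') (auto simp: F_def \<mu>_def null_sets_def)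
  moreover have "{x \<in> space \<mu>. x \<notin> support_of \<mu>} \<subseteq> (\<Union>U\<in>F'. U)"
    using F' by (auto simp: support_of_def F_def not_less)
  ultimately have "AE x in \<mu>. x \<in> support_of \<mu>"
    by (rule AE_I')
  then show ?thesis
    unfolding \<mu>_def using AE_distrD[OF X] by blast
qed

lemma critical_point_iff:
  assumes "(J has_derivative J'') (at \<eta>)"
  shows "critical_point J \<eta> \<longleftrightarrow> (\<forall>h. J'' h = 0)"
proof
  assume "critical_point J \<eta>"
  then have "J'' = (\<lambda>_. 0)"
    using has_derivative_unique[OF assms] unfolding critical_point_def by blast
  then show "\<forall>h. J'' h = 0" by simp
next
  assume "\<forall>h. J'' h = 0"
  then show "critical_point J \<eta>"
    using assms unfolding critical_point_def by (simp add: fun_eq_iff[symmetric])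
qed

lemma affine_family_zero_everywhere_or_at_most_once:
  fixes a b :: "'a \<Rightarrow> real"
  shows "(\<forall>t. \<forall>h. a h + t * b h = 0) \<or> (\<forall>t\<^sub>1 t\<^sub>2. (\<forall>h. a h + t\<^sub>1 * b h = 0) \<and> (\<forall>h. a h + t\<^sub>2 * b h = 0) \<longrightarrow> t\<^sub>1 = t\<^sub>2)"
proof (cases "\<forall>h. b h = 0")
  case False
  then obtain h where "b h \<noteq> 0" by blast
  then have "a h + t\<^sub>1 * b h = 0 \<Longrightarrow> a h + t\<^sub>2 * b h = 0 \<Longrightarrow> t\<^sub>1 = t\<^sub>2" for t\<^sub>1 t\<^sub>2
    by (metis add_left_cancel mult_right_cancel)
  then show ?thesis by blast
qed simp

lemma integral_affine_family:
  fixes f :: "real \<Rightarrow> 'a \<Rightarrow> real"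
  assumes int: "\<And>t. integrable M (f t)"
    and affine: "AE \<omega> in M. f t \<omega> = f 0 \<omega> + t * (f 1 \<omega> - f 0 \<omega>)"
  shows "(\<integral>\<omega>. f t \<omega> \<partial>M) = (\<integral>\<omega>. f 0 \<omega> \<partial>M) + t * ((\<integral>\<omega>. f 1 \<omega> \<partial>M) - (\<integral>\<omega>. f 0 \<omega> \<partial>M))"
proof -
  have "(\<integral>\<omega>. f t \<omega> \<partial>M) = (\<integral>\<omega>. f 0 \<omega> + t * (f 1 \<omega> - f 0 \<omega>) \<partial>M)"
    using int affine by (intro integral_cong_AE) auto
  also have "\<dots> = (\<integral>\<omega>. f 0 \<omega> \<partial>M) + t * ((\<integral>\<omega>. f 1 \<omega> \<partial>M) - (\<integral>\<omega>. f 0 \<omega> \<partial>M))"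
    using int by simp
  finally show ?thesis .
qed

lemma theta_path_0 [simp]: "theta_path \<theta> lam0 lam 0 = \<theta>"
  by (simp add: theta_path_def)

lemma preact_theta_path [simp]: "preact x (theta_path \<theta> lam0 lam t) j = preact x \<theta> j"
  by (simp add: preact_def theta_path_def)

lemma Psi_theta_path:
  "Psi \<psi> (theta_path \<theta> lam0 lam t) x = Psi \<psi> \<theta> x
     + (t * (lam0 + (\<Sum>j\<in>UNIV. lam $ j * \<psi> (preact x \<theta> j)))) *\<^sub>R (\<chi> k. 1)"
  by (simp add: Psi_def theta_path_def vec_eq_iff preact_def[symmetric] algebra_simps
      sum.distrib sum_distrib_left)

lemma DPsi_theta_path:
  "DPsi \<psi> \<psi>' (theta_path \<theta> lam0 lam t) x h = DPsi \<psi> \<psi>' \<theta> x h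
     + (t * (\<Sum>j\<in>UNIV. lam $ j * (\<psi>' (preact x \<theta> j) * preact x h j))) *\<^sub>R (\<chi> k. 1)"
  by (simp add: DPsi_def vec_eq_iff algebra_simps sum.distrib sum_distrib_left)
     (simp add: theta_path_def algebra_simps sum.distrib)

lemma DPsi_rescaled_direction:
  fixes \<theta> :: "('i::finite, 'h::finite, 'o::finite) param"
  assumes single_output: "CARD('o) = 1"
    and no_deactivation: "\<not> deactivation_redundancy \<theta>"
  obtains h' where "\<And>x. DPsi \<psi> \<psi>' \<theta> x h'
    = (\<Sum>j\<in>UNIV. lam $ j * (\<psi>' (preact x \<theta> j) * preact x h j)) *\<^sub>R (\<chi> k. 1)"
proof -
  obtain o\<^sub>0 :: 'o where UNIV_o: "UNIV = {o\<^sub>0}"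
    using single_output card_1_singletonE by blast
  define w where "w j = snd (fst \<theta>) $ j $ o\<^sub>0" for j
  have row: "snd (fst \<theta>) $ j = w j *\<^sub>R (\<chi> k. 1)" for j
    using UNIV_o by (auto simp: w_def vec_eq_iff)
  have w_nonzero: "w j \<noteq> 0" for j
    using no_deactivation row[of j] by (auto simp: deactivation_redundancy_def)
  define h' :: "('i, 'h, 'o) param" where
    "h' = ((\<chi> i j. fst (fst h) $ i $ j * lam $ j / w j, 0), (\<chi> j. fst (snd h) $ j * lam $ j / w j, 0))"
  have "preact x h' j = lam $ j / w j * preact x h j" for x j
    by (simp add: h'_def preact_def sum_distrib_left algebra_simps)
  then have summand: "(\<psi>' (preact x \<theta> j) * preact x h' j) * w j
      = lam $ j * (\<psi>' (preact x \<theta> j) * preact x h j)" for x j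
    using w_nonzero[of j] by (simp add: field_simps)
  have "DPsi \<psi> \<psi>' \<theta> x h'
      = (\<Sum>j\<in>UNIV. ((\<psi>' (preact x \<theta> j) * preact x h' j) * w j) *\<^sub>R (\<chi> k. 1))" for x
    by (simp add: DPsi_def row h'_def)
  then show thesis
    by (intro that) (simp add: summand scaleR_sum_left)
qed

context
  fixes \<psi> \<psi>' :: "real \<Rightarrow> real"
    and loss :: "(real^'o::finite) \<times> (real^'o) \<Rightarrow> real"
    and D :: "(real^'o) \<times> (real^'o) \<Rightarrow> ((real^'o) \<times> (real^'o)) \<Rightarrow>\<^sub>L real"
    and M :: "'a measure" and X :: "'a \<Rightarrow> real^'i::finite" and Y :: "'a \<Rightarrow> real^'o"
    and J' :: "('i, 'h::finite, 'o) param \<Rightarrow> 'a \<Rightarrow> ('i, 'h, 'o) param \<Rightarrow> real"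
  assumes psi_deriv: "\<And>z. (\<psi> has_real_derivative \<psi>' z) (at z)"
    and loss_deriv: "\<And>z. (loss has_derivative blinfun_apply (D z)) (at z)"
    and integrand_deriv: "\<And>\<eta> \<omega>. ((\<lambda>\<eta>'. loss (Psi \<psi> \<eta>' (X \<omega>), Y \<omega>)) has_derivative J' \<eta> \<omega>) (at \<eta>)"
    and deriv_integrable: "\<And>\<eta> h. integrable M (\<lambda>\<omega>. J' \<eta> \<omega> h)"
begin

lemma integrand_deriv_eq: "J' \<eta> \<omega> h = D (Psi \<psi> \<eta> (X \<omega>), Y \<omega>) (DPsi \<psi> \<psi>' \<eta> (X \<omega>) h, 0)"
proof -
  have "((\<lambda>\<eta>'. (Psi \<psi> \<eta>' (X \<omega>), Y \<omega>)) has_derivative (\<lambda>h. (DPsi \<psi> \<psi>' \<eta> (X \<omega>) h, 0))) (at \<eta>)"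
    by (intro has_derivative_Pair has_derivative_Psi[OF psi_deriv] has_derivative_const)
  from has_derivative_compose[OF this loss_deriv]
  have "((\<lambda>\<eta>'. loss (Psi \<psi> \<eta>' (X \<omega>), Y \<omega>)) has_derivative
      (\<lambda>h. D (Psi \<psi> \<eta> (X \<omega>), Y \<omega>) (DPsi \<psi> \<psi>' \<eta> (X \<omega>) h, 0))) (at \<eta>)"
    by (simp add: o_def)
  with integrand_deriv show ?thesis
    by (metis has_derivative_unique)
qed

lemma integrand_deriv_theta_path:
  assumes vanish: "lam0 + (\<Sum>j\<in>UNIV. lam $ j * \<psi> (preact (X \<omega>) \<theta> j)) = 0"
  shows "J' (theta_path \<theta> lam0 lam t) \<omega> h = J' \<theta> \<omega> h + t * D (Psi \<psi> \<theta> (X \<omega>), Y \<omega>)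
    ((\<Sum>j\<in>UNIV. lam $ j * (\<psi>' (preact (X \<omega>) \<theta> j) * preact (X \<omega>) h j)) *\<^sub>R (\<chi> k. 1), 0)"
proof -
  let ?c = "\<Sum>j\<in>UNIV. lam $ j * (\<psi>' (preact (X \<omega>) \<theta> j) * preact (X \<omega>) h j)"
  have "(DPsi \<psi> \<psi>' (theta_path \<theta> lam0 lam t) (X \<omega>) h, 0)
      = (DPsi \<psi> \<psi>' \<theta> (X \<omega>) h, 0) + t *\<^sub>R (?c *\<^sub>R (\<chi> k. 1), 0 :: real^'o)"
    by (simp add: DPsi_theta_path)
  moreover have "Psi \<psi> (theta_path \<theta> lam0 lam t) (X \<omega>) = Psi \<psi> \<theta> (X \<omega>)"
    using vanish by (simp add: Psi_theta_path)
  ultimately show ?thesis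
    unfolding integrand_deriv_eq by (simp only: blinfun.add_right blinfun.scaleR_right) simp
qed

lemma integral_deriv_theta_path:
  assumes vanish: "AE \<omega> in M. lam0 + (\<Sum>j\<in>UNIV. lam $ j * \<psi> (preact (X \<omega>) \<theta> j)) = 0"
  shows "(\<integral>\<omega>. J' (theta_path \<theta> lam0 lam t) \<omega> h \<partial>M) = (\<integral>\<omega>. J' \<theta> \<omega> h \<partial>M)
    + t * ((\<integral>\<omega>. J' (theta_path \<theta> lam0 lam 1) \<omega> h \<partial>M) - (\<integral>\<omega>. J' \<theta> \<omega> h \<partial>M))"
proof -
  have "AE \<omega> in M. J' (theta_path \<theta> lam0 lam t) \<omega> h = J' (theta_path \<theta> lam0 lam 0) \<omega> h
      + t * (J' (theta_path \<theta> lam0 lam 1) \<omega> h - J' (theta_path \<theta> lam0 lam 0) \<omega> h)"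
    using vanish by eventually_elim (simp only: integrand_deriv_theta_path theta_path_0, simp)
  from integral_affine_family[OF deriv_integrable this] show ?thesis
    by (simp only: theta_path_0)
qed

lemma integral_deriv_theta_path_increment:
  fixes \<theta> :: "('i, 'h, 'o) param"
  assumes vanish: "AE \<omega> in M. lam0 + (\<Sum>j\<in>UNIV. lam $ j * \<psi> (preact (X \<omega>) \<theta> j)) = 0"
    and "CARD('o) = 1" and "\<not> deactivation_redundancy \<theta>"
  obtains h' where "(\<integral>\<omega>. J' (theta_path \<theta> lam0 lam 1) \<omega> h \<partial>M) - (\<integral>\<omega>. J' \<theta> \<omega> h \<partial>M)
    = (\<integral>\<omega>. J' \<theta> \<omega> h' \<partial>M)"
proof -
  obtain h' where h': "\<And>x. DPsi \<psi> \<psi>' \<theta> x h'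
      = (\<Sum>j\<in>UNIV. lam $ j * (\<psi>' (preact x \<theta> j) * preact x h j)) *\<^sub>R (\<chi> k. 1)"
    using DPsi_rescaled_direction assms(2,3) by blast
  have increment: "J' (theta_path \<theta> lam0 lam 1) \<omega> h - J' \<theta> \<omega> h = J' \<theta> \<omega> h'"
    if "lam0 + (\<Sum>j\<in>UNIV. lam $ j * \<psi> (preact (X \<omega>) \<theta> j)) = 0" for \<omega>
    unfolding integrand_deriv_theta_path[OF that] integrand_deriv_eq[of \<theta> \<omega> h'] h' by simp
  have "AE \<omega> in M. J' (theta_path \<theta> lam0 lam 1) \<omega> h - J' \<theta> \<omega> h = J' \<theta> \<omega> h'"
    using vanish by (rule eventually_mono) (rule increment)
  then have "(\<integral>\<omega>. J' (theta_path \<theta> lam0 lam 1) \<omega> h - J' \<theta> \<omega> h \<partial>M) = (\<integral>\<omega>. J' \<theta> \<omega> h' \<partial>M)"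
    using deriv_integrable by (intro integral_cong_AE) auto
  then show thesis
    using deriv_integrable by (intro that) simp
qed

end

theorem theorem4p2:
  fixes \<psi> :: "real \<Rightarrow> real"
    and M :: "'a measure"
    and X :: "'a \<Rightarrow> real^'i::finite"
    and Y :: "'a \<Rightarrow> real^'o::finite"
    and loss :: "(real^'o) \<times> (real^'o) \<Rightarrow> real"
    and J :: "('i, 'h::finite, 'o) param \<Rightarrow> real"
    and J' :: "('i, 'h, 'o) param \<Rightarrow> 'a \<Rightarrow> ('i, 'h, 'o) param \<Rightarrow> real"
    and \<theta> :: "('i, 'h, 'o) param"
    and lam0 :: real and lam :: "real^'h"
  assumes psi_diff: "\<And>z. \<psi> differentiable (at z)"
    and prob: "prob_space M"
    and X_meas: "X \<in> borel_measurable M"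
    and Y_meas: "Y \<in> borel_measurable M"
    and loss_nonneg: "\<And>z. loss z \<ge> 0"
    and loss_C1: "C1_UNIV loss"
    and J_def: "\<And>\<eta>. J \<eta> = (\<integral>\<omega>. loss (Psi \<psi> \<eta> (X \<omega>), Y \<omega>) \<partial>M)"
    and J_integrable: "\<And>\<eta> :: ('i, 'h, 'o) param. integrable M (\<lambda>\<omega>. loss (Psi \<psi> \<eta> (X \<omega>), Y \<omega>))"
    and J_C1: "C1_UNIV J"
    and integrand_deriv: "\<And>\<eta> \<omega>. ((\<lambda>\<eta>'. loss (Psi \<psi> \<eta>' (X \<omega>), Y \<omega>)) has_derivative J' \<eta> \<omega>) (at \<eta>)"
    and deriv_integrable: "\<And>\<eta> h. integrable M (\<lambda>\<omega>. J' \<eta> \<omega> h)"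
    and interchange: "\<And>\<eta>. (J has_derivative (\<lambda>h. \<integral>\<omega>. J' \<eta> \<omega> h \<partial>M)) (at \<eta>)"
    and redundancy: "bias_redundancy \<psi> (support_of (distr M borel X)) \<theta> \<or> duplication_redundancy \<theta>"
    and lam_nonzero: "lam0 \<noteq> 0 \<or> lam \<noteq> 0"
    and lam_vanish: "\<And>x. x \<in> support_of (distr M borel X) \<Longrightarrow>
        lam0 + (\<Sum>j\<in>UNIV. lam $ j * \<psi> ((fst (snd \<theta>)) $ j + (\<Sum>i\<in>UNIV. x $ i * (fst (fst \<theta>)) $ i $ j))) = 0"
  shows "((\<forall>t. critical_point J (theta_path \<theta> lam0 lam t)) \<or>
          (\<forall>t1 t2. critical_point J (theta_path \<theta> lam0 lam t1) \<and> critical_point J (theta_path \<theta> lam0 lam t2)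
                   \<longrightarrow> t1 = t2))
       \<and> (CARD('o) = 1 \<and> \<not> deactivation_redundancy \<theta> \<and> critical_point J \<theta>
            \<longrightarrow> (\<forall>t. critical_point J (theta_path \<theta> lam0 lam t)))"
proof -
  obtain D where loss_deriv: "\<And>z. (loss has_derivative blinfun_apply (D z)) (at z)"
    using loss_C1 unfolding C1_UNIV_def by blast
  have psi_deriv: "\<And>z. (\<psi> has_real_derivative deriv \<psi> z) (at z)"
    using psi_diff DERIV_deriv_iff_real_differentiable by blast
  have vanish: "AE \<omega> in M. lam0 + (\<Sum>j\<in>UNIV. lam $ j * \<psi> (preact (X \<omega>) \<theta> j)) = 0"
    using AE_in_support_of[OF X_meas] by eventually_elim (simp add: lam_vanish preact_def)
  note deriv_theta_path = integral_deriv_theta_path[OF psi_deriv loss_deriv integrand_deriv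
      deriv_integrable vanish]
  define a where "a h = (\<integral>\<omega>. J' \<theta> \<omega> h \<partial>M)" for h
  define b where "b h = (\<integral>\<omega>. J' (theta_path \<theta> lam0 lam 1) \<omega> h \<partial>M) - a h" for h
  have critical_iff: "critical_point J (theta_path \<theta> lam0 lam t) \<longleftrightarrow> (\<forall>h. a h + t * b h = 0)" for t
    using critical_point_iff[OF interchange] by (simp add: deriv_theta_path[where t = t] a_def b_def)
  have "\<forall>t. critical_point J (theta_path \<theta> lam0 lam t)"
    if "CARD('o) = 1" and "\<not> deactivation_redundancy \<theta>" and "critical_point J \<theta>"
  proof -
    have "a = (\<lambda>_. 0)"
      using \<open>critical_point J \<theta>\<close> critical_iff[of 0] by (auto simp: fun_eq_iff)
    moreover have "b h = 0" for h
      using integral_deriv_theta_path_increment[OF psi_deriv loss_deriv integrand_deriv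
          deriv_integrable vanish that(1,2)] \<open>a = (\<lambda>_. 0)\<close>
      unfolding b_def a_def by metis
    ultimately show ?thesis
      by (simp add: critical_iff)
  qed
  then show ?thesis
    using affine_family_zero_everywhere_or_at_most_once[of a b] by (simp add: critical_iff)
qed

end
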